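(* Let $\varepsilon>0$ and $\delta\in(0,1)$, and set $p=1-e^{-\varepsilon}$ and $k=\left\lceil\frac{1}{\varepsilon}\ln\left(\frac{e^{\varepsilon}+2\delta-1}{(e^{\varepsilon}+1)\delta}\right)\right\rceil$. Let $f$ be an integer-valued query on databases with sensitivity $1$ (i.e. $|f(D)-f(D')|\le1$ whenever $D'$ is obtained from $D$ by adding or removing one user). The truncated geometric mechanism, which on input $D$ outputs $f(D)+X$ with $X$ drawn from the $k$-truncated symmetric geometric distribution with parameter $p$, is $(\varepsilon,\delta)$-differentially private.
   Context: For $p\in(0,1)$ and an integer $k\ge1$, the $k$-truncated symmetric geometric distribution ($k$-TSGD) with parameter $p$ is the distribution on $\mathbb{Z}$ with $\Pr[X=x]=c\,(1-p)^{|x|}$ for $x\in[-k,k]\cap\mathbb{Z}$ and $0$ otherwise, where $c=\frac{p}{1+(1-p)-2(1-p)^{k+1}}$. A randomized mechanism $\mathcal{M}$ is $(\varepsilon,\delta)$-differentially private if for any databases $D,D'$ where $D'$ is obtained from $D$ by adding or removing one user, and all sets $S$ of outputs, $\Pr[\mathcal{M}(D)\in S]\le e^{\varepsilon}\Pr[\mathcal{M}(D')\in S]+\delta$. *)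

theory Defs
  imports "HOL-Probability.Probability" "HOL-Library.Multiset"
begin

text \<open>Normalising constant of the k-truncated symmetric geometric distribution.\<close>
definition tsgd_const :: "real \<Rightarrow> nat \<Rightarrow> real" where
  "tsgd_const p k = p / (1 + (1 - p) - 2 * (1 - p) ^ (k + 1))"

definition tsgd_mass :: "real \<Rightarrow> nat \<Rightarrow> int \<Rightarrow> real" where
  "tsgd_mass p k x = (if \<bar>x\<bar> \<le> int k then tsgd_const p k * (1 - p) ^ nat \<bar>x\<bar> else 0)"

definition tsgd :: "real \<Rightarrow> nat \<Rightarrow> int pmf" where
  "tsgd p k = embed_pmf (tsgd_mass p k)"

definition neighbour :: "'u multiset \<Rightarrow> 'u multiset \<Rightarrow> bool" where
  "neighbour D D' \<longleftrightarrow> (\<exists>u. D' = add_mset u D \<or> D = add_mset u D')"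

definition sensitivity_one :: "('u multiset \<Rightarrow> int) \<Rightarrow> bool" where
  "sensitivity_one f \<longleftrightarrow> (\<forall>D D'. neighbour D D' \<longrightarrow> \<bar>f D - f D'\<bar> \<le> 1)"

definition differentially_private ::
  "('u multiset \<Rightarrow> 'o pmf) \<Rightarrow> real \<Rightarrow> real \<Rightarrow> bool" where
  "differentially_private M \<epsilon> \<delta> \<longleftrightarrow>
     (\<forall>D D' S. neighbour D D' \<longrightarrow>
        measure_pmf.prob (M D) S \<le> exp \<epsilon> * measure_pmf.prob (M D') S + \<delta>)"

definition truncated_geometric_mechanism ::
  "('u multiset \<Rightarrow> int) \<Rightarrow> real \<Rightarrow> nat \<Rightarrow> 'u multiset \<Rightarrow> int pmf" where
  "truncated_geometric_mechanism f p k D = map_pmf (\<lambda>x. f D + x) (tsgd p k)"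

end

theory Submission
  imports Defs
begin

text \<open>With q = 1 - p = exp (-\<epsilon>), moving the argument of the k-TSGD by at most one changes its
  mass by a factor of at most exp \<epsilon>, except at the single boundary point \<plusminus>k whose
  neighbour lies outside the support. Hence every event of one output distribution is bounded by
  exp \<epsilon> times the corresponding event of the neighbouring one plus the boundary mass
  c q^k, and the truncation level k is chosen exactly so that c q^k \<le> \<delta>.\<close>

lemma sum_symmetric_geometric:
  fixes q :: real
  shows "(1 - q) * (\<Sum>x\<in>{-int k..int k}. q ^ nat \<bar>x\<bar>) = 1 + q - 2 * q ^ (k + 1)"
proof (induction k)
  case 0
  then show ?case by simp
next
  case (Suc k)
  let ?S = "\<lambda>k. \<Sum>x\<in>{-int k..int k}. q ^ nat \<bar>x\<bar>"
  have "{-int (Suc k)..int (Suc k)} = insert (-int (Suc k)) (insert (int (Suc k)) {-int k..int k})"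
    by auto
  then have "?S (Suc k) = 2 * q ^ Suc k + ?S k"
    by (simp add: nat_add_distrib)
  then have "(1 - q) * ?S (Suc k) = (1 - q) * (2 * q ^ Suc k) + (1 - q) * ?S k"
    by (simp only: distrib_left)
  also have "\<dots> = (1 - q) * (2 * q ^ Suc k) + (1 + q - 2 * q ^ (k + 1))"
    by (simp only: Suc.IH)
  finally show ?case
    by (simp add: algebra_simps)
qed

lemma tsgd_const_pos:
  assumes "0 < p" "p \<le> 1"
  shows "0 < tsgd_const p k"
proof -
  have "(1 - p) ^ (k + 1) \<le> 1 - p"
    using assms by (simp add: power_le_one mult_left_le)
  then show ?thesis
    using assms by (simp add: tsgd_const_def)
qed

lemma tsgd_const_mult_sum:
  assumes "0 < p" "p \<le> 1"
  shows "tsgd_const p k * (\<Sum>x\<in>{-int k..int k}. (1 - p) ^ nat \<bar>x\<bar>) = 1"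
proof -
  have "p * (\<Sum>x\<in>{-int k..int k}. (1 - p) ^ nat \<bar>x\<bar>) = 1 + (1 - p) - 2 * (1 - p) ^ (k + 1)"
    using sum_symmetric_geometric[of "1 - p" k] by simp
  moreover have "1 + (1 - p) - 2 * (1 - p) ^ (k + 1) \<noteq> 0"
    using tsgd_const_pos[OF assms, of k] by (auto simp: tsgd_const_def)
  ultimately show ?thesis
    by (simp add: tsgd_const_def)
qed

context
  fixes p :: real and k :: nat
  assumes p_pos: "0 < p" and p_le_1: "p \<le> 1"
begin

lemma tsgd_mass_nonneg: "0 \<le> tsgd_mass p k x"
  using tsgd_const_pos[OF p_pos p_le_1, of k] p_le_1 by (simp add: tsgd_mass_def)

lemma nn_integral_tsgd_mass: "(\<integral>\<^sup>+x. ennreal (tsgd_mass p k x) \<partial>count_space UNIV) = 1"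
proof -
  have "(\<integral>\<^sup>+x. ennreal (tsgd_mass p k x) \<partial>count_space UNIV)
      = (\<integral>\<^sup>+x. ennreal (tsgd_mass p k x) \<partial>count_space {-int k..int k})"
    by (subst nn_integral_count_space_indicator)
       (auto intro!: nn_integral_cong simp: tsgd_mass_def indicator_def)
  also have "\<dots> = ennreal (\<Sum>x\<in>{-int k..int k}. tsgd_mass p k x)"
    by (simp add: nn_integral_count_space_finite sum_ennreal tsgd_mass_nonneg)
  also have "(\<Sum>x\<in>{-int k..int k}. tsgd_mass p k x)
      = tsgd_const p k * (\<Sum>x\<in>{-int k..int k}. (1 - p) ^ nat \<bar>x\<bar>)"
    by (auto simp: sum_distrib_left tsgd_mass_def intro!: sum.cong)
  finally show ?thesis
    using tsgd_const_mult_sum[OF p_pos p_le_1] by simp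
qed

lemma pmf_tsgd: "pmf (tsgd p k) x = tsgd_mass p k x"
  unfolding tsgd_def by (rule pmf_embed_pmf[OF tsgd_mass_nonneg nn_integral_tsgd_mass])

lemma measure_tsgd:
  "measure_pmf.prob (tsgd p k) A = (\<Sum>x\<in>A \<inter> {-int k..int k}. tsgd_mass p k x)"
proof -
  have "set_pmf (tsgd p k) \<subseteq> {-int k..int k}"
    by (auto simp: set_pmf_eq pmf_tsgd tsgd_mass_def)
  then have "A \<inter> {-int k..int k} \<inter> set_pmf (tsgd p k) = A \<inter> set_pmf (tsgd p k)"
    by blast
  then have "measure_pmf.prob (tsgd p k) A = measure_pmf.prob (tsgd p k) (A \<inter> {-int k..int k})"
    by (metis measure_Int_set_pmf)
  then show ?thesis
    by (simp add: measure_measure_pmf_finite pmf_tsgd)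
qed

end

lemma tsgd_mass_le_shift:
  assumes "0 < p" "p < 1" "\<bar>d\<bar> \<le> 1" "\<bar>x\<bar> \<le> int k" "\<bar>x - d\<bar> \<le> int k"
  shows "tsgd_mass p k x \<le> tsgd_mass p k (x - d) / (1 - p)"
proof -
  have "(1 - p) ^ (nat \<bar>x\<bar> + 1) \<le> (1 - p) ^ nat \<bar>x - d\<bar>"
    using assms by (intro power_decreasing) auto
  then have "(1 - p) ^ nat \<bar>x\<bar> \<le> (1 - p) ^ nat \<bar>x - d\<bar> / (1 - p)"
    using assms(2) by (simp add: field_simps)
  then show ?thesis
    using assms tsgd_const_pos[of p k]
    by (simp add: tsgd_mass_def mult_left_mono times_divide_eq_right[symmetric] del: times_divide_eq_right)
qed

lemma measure_tsgd_le_shift: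
  assumes "0 < p" "p < 1" "\<bar>d\<bar> \<le> 1"
  shows "measure_pmf.prob (tsgd p k) A
    \<le> measure_pmf.prob (tsgd p k) ((\<lambda>x. x + d) -` A) / (1 - p) + tsgd_const p k * (1 - p) ^ k"
proof -
  let ?K = "{-int k..int k}" and ?m = "tsgd_mass p k"
  define B where "B = {x \<in> A \<inter> ?K. x - d \<in> ?K}"
  define C where "C = {x \<in> A \<inter> ?K. x - d \<notin> ?K}"
  have fin: "finite B" "finite C"
    unfolding B_def C_def by (rule finite_subset[of _ ?K]; auto)+
  have "measure_pmf.prob (tsgd p k) A = sum ?m (A \<inter> ?K)"
    using assms by (simp add: measure_tsgd)
  also have "A \<inter> ?K = B \<union> C"
    by (auto simp: B_def C_def)
  also have "sum ?m (B \<union> C) = sum ?m B + sum ?m C"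
    by (rule sum.union_disjoint) (use fin in \<open>auto simp: B_def C_def\<close>)
  also have "sum ?m B \<le> (\<Sum>x\<in>B. ?m (x - d)) / (1 - p)"
    unfolding sum_divide_distrib
    by (intro sum_mono tsgd_mass_le_shift) (use assms in \<open>auto simp: B_def\<close>)
  also have "(\<Sum>x\<in>B. ?m (x - d)) = sum ?m ((\<lambda>x. x - d) ` B)"
    by (simp add: sum.reindex inj_on_def)
  also have "\<dots> \<le> sum ?m ((\<lambda>x. x + d) -` A \<inter> ?K)"
    by (intro sum_mono2 tsgd_mass_nonneg) (use assms in \<open>auto simp: B_def\<close>)
  also have "\<dots> = measure_pmf.prob (tsgd p k) ((\<lambda>x. x + d) -` A)"
    using assms by (simp add: measure_tsgd)
  also have "sum ?m C \<le> of_nat (card C) * (tsgd_const p k * (1 - p) ^ k)"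
  proof (rule sum_bounded_above)
    fix x
    assume "x \<in> C"
    then have "\<bar>x\<bar> = int k"
      using assms(3) by (auto simp: C_def)
    then show "?m x \<le> tsgd_const p k * (1 - p) ^ k"
      by (simp add: tsgd_mass_def)
  qed
  also have "\<dots> \<le> tsgd_const p k * (1 - p) ^ k"
  proof -
    have "card C \<le> 1"
      using assms(3) fin(2) by (auto simp: C_def card_le_Suc0_iff_eq)
    then show ?thesis
      using assms tsgd_const_pos[of p k] by (simp add: mult_left_le_one_le)
  qed
  finally show ?thesis
    using assms by (simp add: divide_right_mono)
qed

lemma tsgd_boundary_mass_le:
  fixes \<epsilon> \<delta> :: real
  assumes "0 < \<epsilon>" "0 \<le> \<delta>"
    and bound: "exp (- \<epsilon>) ^ k * (exp \<epsilon> + 2 * \<delta> - 1) \<le> (exp \<epsilon> + 1) * \<delta>"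
  shows "tsgd_const (1 - exp (- \<epsilon>)) k * exp (- \<epsilon>) ^ k \<le> \<delta>"
proof -
  define q where "q = exp (- \<epsilon>)"
  have q: "0 < q" "q < 1" "q * exp \<epsilon> = 1"
    using assms(1) by (simp_all add: q_def exp_minus_inverse mult.commute)
  have den_pos: "0 < 1 + q - 2 * q ^ (k + 1)"
    using tsgd_const_pos[of "1 - q" k] q by (simp add: tsgd_const_def zero_less_divide_iff)
  have "q ^ k * (1 - q + 2 * \<delta> * q) = q * (q ^ k * (exp \<epsilon> + 2 * \<delta> - 1))"
    using q(3) by (simp add: algebra_simps)
  also have "\<dots> \<le> q * ((exp \<epsilon> + 1) * \<delta>)"
    using bound q(1) unfolding q_def by simp
  also have "\<dots> = (1 + q) * \<delta>"
    using q(3) by (simp add: algebra_simps)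
  finally have "(1 - q) * q ^ k \<le> \<delta> * (1 + q - 2 * q ^ (k + 1))"
    by (simp add: algebra_simps)
  then show ?thesis
    using den_pos by (simp add: tsgd_const_def q_def[symmetric] pos_divide_le_eq)
qed

lemma exp_neg_pow_le_of_ln_le:
  fixes \<epsilon> \<delta> :: real
  assumes "0 < \<epsilon>" "0 < \<delta>"
    and k: "ln ((exp \<epsilon> + 2 * \<delta> - 1) / ((exp \<epsilon> + 1) * \<delta>)) \<le> \<epsilon> * real k"
  shows "exp (- \<epsilon>) ^ k * (exp \<epsilon> + 2 * \<delta> - 1) \<le> (exp \<epsilon> + 1) * \<delta>"
proof -
  define R where "R = (exp \<epsilon> + 2 * \<delta> - 1) / ((exp \<epsilon> + 1) * \<delta>)"
  have "1 < exp \<epsilon>"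
    using assms(1) by simp
  then have numerator_pos: "0 < exp \<epsilon> + 2 * \<delta> - 1"
    using assms(2) by linarith
  then have R_pos: "0 < R"
    using assms(2) unfolding R_def by (intro divide_pos_pos mult_pos_pos) (auto simp: add_pos_pos)
  have "exp (- \<epsilon>) ^ k = exp (- (\<epsilon> * real k))"
    by (simp add: exp_of_nat_mult[symmetric] mult.commute)
  also have "\<dots> \<le> exp (- ln R)"
    using k by (simp add: R_def)
  also have "\<dots> = (exp \<epsilon> + 1) * \<delta> / (exp \<epsilon> + 2 * \<delta> - 1)"
    using numerator_pos R_pos by (simp add: exp_minus R_def)
  finally show ?thesis
    using numerator_pos by (simp add: pos_le_divide_eq)
qed

theorem theorem4:
  fixes f :: "'u multiset \<Rightarrow> int" and \<epsilon> \<delta> p :: real and k :: nat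
  assumes "\<epsilon> > 0" and "0 < \<delta>" and "\<delta> < 1"
    and "p = 1 - exp (- \<epsilon>)"
    and "k = nat \<lceil>(1 / \<epsilon>) * ln ((exp \<epsilon> + 2 * \<delta> - 1) / ((exp \<epsilon> + 1) * \<delta>))\<rceil>"
    and "sensitivity_one f"
  shows "differentially_private (truncated_geometric_mechanism f p k) \<epsilon> \<delta>"
proof -
  have p: "0 < p" "p < 1" "exp \<epsilon> = 1 / (1 - p)"
    using assms(1) by (simp_all add: assms(4) exp_minus inverse_eq_divide)
  have "(1 / \<epsilon>) * ln ((exp \<epsilon> + 2 * \<delta> - 1) / ((exp \<epsilon> + 1) * \<delta>)) \<le> real k"
    unfolding assms(5) by (rule real_nat_ceiling_ge)
  then have "ln ((exp \<epsilon> + 2 * \<delta> - 1) / ((exp \<epsilon> + 1) * \<delta>)) \<le> \<epsilon> * real k"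
    using assms(1) by (simp add: pos_divide_le_eq mult.commute)
  then have tail: "tsgd_const p k * (1 - p) ^ k \<le> \<delta>"
    using tsgd_boundary_mass_le[OF assms(1) _ exp_neg_pow_le_of_ln_le] assms(1,2,4) by simp
  show ?thesis
    unfolding differentially_private_def
  proof (intro allI impI)
    fix D D' :: "'u multiset" and S :: "int set"
    assume "neighbour D D'"
    then have d: "\<bar>f D' - f D\<bar> \<le> 1"
      using assms(6) unfolding sensitivity_one_def by (metis abs_minus_commute)
    have shift: "(\<lambda>x. x + (f D' - f D)) -` ((\<lambda>x. f D + x) -` S) = (\<lambda>x. f D' + x) -` S"
      by (auto simp: algebra_simps)
    show "measure_pmf.prob (truncated_geometric_mechanism f p k D) S
        \<le> exp \<epsilon> * measure_pmf.prob (truncated_geometric_mechanism f p k D') S + \<delta>"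
      using measure_tsgd_le_shift[OF p(1,2) d, of k "(\<lambda>x. f D + x) -` S"] tail
      by (simp add: truncated_geometric_mechanism_def shift p(3))
  qed
qed

end
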